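(* Let $K\ge 1$ be an integer and $d\in[0,1]$. Let $C_{2K}(d)$ denote the capacity of the $2K$-ary i.i.d. deletion channel with deletion probability $d$ and $C_2(d)$ the capacity of the binary i.i.d. deletion channel with the same deletion probability $d$. Then $$C_{2K}(d)\le C_2(d)+(1-d)\log(K).$$
   Context: The $q$-ary i.i.d. deletion channel with deletion probability $d$: an input sequence $\mathbf X=(x_1,\dots,x_N)\in\{1,\dots,q\}^N$ is transmitted; each symbol is independently (and independently of $\mathbf X$) deleted with probability $d$ or delivered unchanged with probability $1-d$, and the output $\mathbf Y=(y_1,\dots,y_M)$ is the subsequence of surviving symbols in their original order (so $M\sim\mathrm{Binomial}(N,1-d)$); neither transmitter nor receiver knows the positions of deletions. Its capacity is $C_q(d)=\lim_{N\to\infty}\max_{P(\mathbf X)}\frac1N I(\mathbf X;\mathbf Y)$, where the maximum is over all distributions of $\mathbf X$ on $\{1,\dots,q\}^N$. All logarithms are taken to the same base (the unit of information). *)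

theory Defs
  imports "HOL-Analysis.Analysis"
begin

definition del_inputs :: "nat \<Rightarrow> nat \<Rightarrow> nat list set" where
  "del_inputs q N = {xs. length xs = N \<and> set xs \<subseteq> {1..q}}"

definition del_outputs :: "nat \<Rightarrow> nat \<Rightarrow> nat list set" where
  "del_outputs q N = {ys. length ys \<le> N \<and> set ys \<subseteq> {1..q}}"

text \<open>Transition probability P(Y = y | X = x) of the i.i.d. deletion channel:
  the set S of surviving positions is chosen with each position surviving
  independently with probability 1 - d; the output is the subsequence nths x S.\<close>
definition del_trans :: "real \<Rightarrow> nat list \<Rightarrow> nat list \<Rightarrow> real" where
  "del_trans d x y =
     (\<Sum>S\<in>{S. S \<subseteq> {0..<length x} \<and> nths x S = y}.
        (1 - d) ^ card S * d ^ (length x - card S))"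

definition del_input_dists :: "nat \<Rightarrow> nat \<Rightarrow> (nat list \<Rightarrow> real) set" where
  "del_input_dists q N = {P. (\<forall>x. P x \<ge> 0) \<and> (\<forall>x. x \<notin> del_inputs q N \<longrightarrow> P x = 0)
                               \<and> (\<Sum>x\<in>del_inputs q N. P x) = 1}"

definition del_output_prob :: "nat \<Rightarrow> nat \<Rightarrow> real \<Rightarrow> (nat list \<Rightarrow> real) \<Rightarrow> nat list \<Rightarrow> real" where
  "del_output_prob q N d P y = (\<Sum>x\<in>del_inputs q N. P x * del_trans d x y)"

definition del_mutual_info :: "real \<Rightarrow> nat \<Rightarrow> nat \<Rightarrow> real \<Rightarrow> (nat list \<Rightarrow> real) \<Rightarrow> real" where
  "del_mutual_info b q N d P =
     (\<Sum>x\<in>del_inputs q N. \<Sum>y\<in>del_outputs q N.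
        (if P x * del_trans d x y = 0 then 0
         else P x * del_trans d x y * log b (del_trans d x y / del_output_prob q N d P y)))"

text \<open>max over input distributions of I(X;Y) (the supremum is attained).\<close>
definition del_max_info :: "real \<Rightarrow> nat \<Rightarrow> nat \<Rightarrow> real \<Rightarrow> real" where
  "del_max_info b q N d = (SUP P\<in>del_input_dists q N. del_mutual_info b q N d P)"

definition deletion_capacity :: "real \<Rightarrow> nat \<Rightarrow> real \<Rightarrow> real" where
  "deletion_capacity b q d = lim (\<lambda>N. del_max_info b q N d / real N)"

end

theory Submission
  imports Defs "HOL-Real_Asymp.Real_Asymp"
begin

text \<open>
  Merge the \<open>2K\<close> symbols into two classes of \<open>K\<close> symbols. Since the output \<open>Y\<close> determines
  its merged version, \<open>I(X; Y)\<close> exceeds the information between merged input and merged output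
  by at most the entropy of \<open>Y\<close> given its merged version, and this is at most
  \<open>E |Y| log K = N (1 - d) log K\<close>.
  The limits defining the capacities exist by a Fekete-type argument: concatenating independent
  input blocks of lengths \<open>a\<close> and \<open>c\<close> loses at most \<open>log (a + 1)\<close> of information, the
  uncertainty about where the block boundary falls in the output.
\<close>

section \<open>Deletion patterns\<close>

definition del_weight :: "real \<Rightarrow> nat \<Rightarrow> nat set \<Rightarrow> real" where
  "del_weight d n S = (1 - d) ^ card S * d ^ (n - card S)"

lemma del_trans_eq_sum_weight:
  "del_trans d x y = (\<Sum>S\<in>{S. S \<subseteq> {0..<length x} \<and> nths x S = y}. del_weight d (length x) S)"
  by (simp add: del_trans_def del_weight_def)

lemma finite_subsets_atLeastLessThan: "finite {S. S \<subseteq> {0..<(n::nat)} \<and> P S}"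
  by (rule finite_subset[of _ "Pow {0..<n}"]) auto

lemma del_weight_nonneg: "0 \<le> d \<Longrightarrow> d \<le> 1 \<Longrightarrow> 0 \<le> del_weight d n S"
  by (simp add: del_weight_def)

lemma del_trans_nonneg: "0 \<le> d \<Longrightarrow> d \<le> 1 \<Longrightarrow> 0 \<le> del_trans d x y"
  unfolding del_trans_eq_sum_weight by (rule sum_nonneg) (simp add: del_weight_nonneg)

lemma sum_del_trans_eq_sum_patterns:
  assumes "finite T"
  shows "(\<Sum>y\<in>T. del_trans d x y * g y) =
     (\<Sum>S\<in>{S. S \<subseteq> {0..<length x} \<and> nths x S \<in> T}. del_weight d (length x) S * g (nths x S))"
proof -
  let ?A = "{S. S \<subseteq> {0..<length x} \<and> nths x S \<in> T}"
  have "(\<Sum>S\<in>?A. del_weight d (length x) S * g (nths x S)) =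
     (\<Sum>y\<in>T. \<Sum>S\<in>{S\<in>?A. nths x S = y}. del_weight d (length x) S * g (nths x S))"
    by (rule sum.group[symmetric]) (auto simp: finite_subsets_atLeastLessThan assms)
  also have "\<dots> = (\<Sum>y\<in>T. del_trans d x y * g y)"
    unfolding del_trans_eq_sum_weight sum_distrib_right
    by (rule sum.cong[OF refl], rule sum.cong) auto
  finally show ?thesis by simp
qed

lemma sum_Pow_atLeastLessThan_Suc:
  "(\<Sum>S\<in>Pow {0..<Suc n}. h S) = (\<Sum>S\<in>Pow {0..<n}. h S) + (\<Sum>S\<in>Pow {0..<n}. h (insert n S))"
proof -
  have "inj_on (insert n) (Pow {0..<n})"
    by (rule inj_onI) (metis PowD atLeastLessThan_iff insert_ident order_less_irrefl subsetD)
  moreover have "Pow {0..<Suc n} = Pow {0..<n} \<union> insert n ` Pow {0..<n}"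
    by (simp add: atLeast0_lessThan_Suc Pow_insert)
  moreover have "Pow {0..<n} \<inter> insert n ` Pow {0..<n} = {}" by auto
  ultimately show ?thesis by (simp add: sum.union_disjoint sum.reindex)
qed

lemma del_weight_sums:
  "(\<Sum>S\<in>Pow {0..<n}. del_weight d n S) = 1 \<and>
   (\<Sum>S\<in>Pow {0..<n}. del_weight d n S * card S) = n * (1 - d)"
proof (induction n)
  case 0
  then show ?case by (simp add: del_weight_def)
next
  case (Suc n)
  have card_le: "card S \<le> n" if "S \<in> Pow {0..<n}" for S
    using that card_mono[of "{0..<n}" S] by auto
  have card_insert: "card (insert n S) = Suc (card S)" if "S \<in> Pow {0..<n}" for S
    using that by (subst card_insert_disjoint) (auto intro: finite_subset)
  have deleted: "del_weight d (Suc n) S = d * del_weight d n S" if "S \<in> Pow {0..<n}" for S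
    using card_le[OF that] by (simp add: del_weight_def Suc_diff_le)
  have kept: "del_weight d (Suc n) (insert n S) = (1 - d) * del_weight d n S" if "S \<in> Pow {0..<n}" for S
    using card_le[OF that] card_insert[OF that] by (simp add: del_weight_def)
  define A where "A = (\<Sum>S\<in>Pow {0..<n}. del_weight d n S)"
  define B where "B = (\<Sum>S\<in>Pow {0..<n}. del_weight d n S * card S)"
  have "(\<Sum>S\<in>Pow {0..<Suc n}. del_weight d (Suc n) S) =
      (\<Sum>S\<in>Pow {0..<n}. d * del_weight d n S) + (\<Sum>S\<in>Pow {0..<n}. (1 - d) * del_weight d n S)"
    unfolding sum_Pow_atLeastLessThan_Suc
    by (intro arg_cong2[where f = "(+)"] sum.cong) (simp_all add: deleted kept)
  also have "\<dots> = d * A + (1 - d) * A"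
    by (simp only: A_def sum_distrib_left)
  finally have total: "(\<Sum>S\<in>Pow {0..<Suc n}. del_weight d (Suc n) S) = d * A + (1 - d) * A" .
  have "(\<Sum>S\<in>Pow {0..<Suc n}. del_weight d (Suc n) S * card S) =
      (\<Sum>S\<in>Pow {0..<n}. d * (del_weight d n S * card S))
      + (\<Sum>S\<in>Pow {0..<n}. (1 - d) * (del_weight d n S * card S + del_weight d n S))"
    unfolding sum_Pow_atLeastLessThan_Suc
    by (intro arg_cong2[where f = "(+)"] sum.cong) (simp_all add: deleted kept card_insert algebra_simps)
  also have "\<dots> = d * B + (1 - d) * (B + A)"
    by (simp add: A_def B_def distrib_left sum_distrib_left sum.distrib)
  finally have mean: "(\<Sum>S\<in>Pow {0..<Suc n}. del_weight d (Suc n) S * card S) = d * B + (1 - d) * (B + A)" .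
  show ?case
    using Suc.IH unfolding total mean A_def[symmetric] B_def[symmetric] by (simp add: algebra_simps)
qed

lemma del_inputs_eq: "del_inputs q N = {xs. set xs \<subseteq> {1..q} \<and> length xs = N}"
  by (auto simp: del_inputs_def)

lemma finite_del_inputs: "finite (del_inputs q N)"
  by (simp add: del_inputs_eq finite_lists_length_eq)

lemma card_del_inputs: "card (del_inputs q N) = q ^ N"
  by (simp add: del_inputs_eq card_lists_length_eq)

lemma finite_del_outputs: "finite (del_outputs q N)"
proof -
  have "del_outputs q N = {xs. set xs \<subseteq> {1..q} \<and> length xs \<le> N}"
    by (auto simp: del_outputs_def)
  then show ?thesis by (simp add: finite_lists_length_le)
qed

lemma length_del_input: "x \<in> del_inputs q N \<Longrightarrow> length x = N"
  by (simp add: del_inputs_def)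

lemma nths_in_del_outputs: "x \<in> del_inputs q N \<Longrightarrow> nths x S \<in> del_outputs q N"
proof -
  assume x: "x \<in> del_inputs q N"
  have "length (nths x S) \<le> card {0..<length x}"
    unfolding length_nths by (rule card_mono) auto
  then show ?thesis
    using x set_nths_subset[of x S] by (auto simp: del_inputs_def del_outputs_def)
qed

lemma del_trans_eq_0: "x \<in> del_inputs q N \<Longrightarrow> y \<notin> del_outputs q N \<Longrightarrow> del_trans d x y = 0"
  unfolding del_trans_eq_sum_weight using nths_in_del_outputs[of x q N] by (intro sum.neutral) auto

lemma
  assumes x: "x \<in> del_inputs q N"
  shows sum_del_trans: "(\<Sum>y\<in>del_outputs q N. del_trans d x y) = 1"
    and sum_del_trans_length: "(\<Sum>y\<in>del_outputs q N. del_trans d x y * length y) = N * (1 - d)"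
proof -
  have patterns: "{S. S \<subseteq> {0..<length x} \<and> nths x S \<in> del_outputs q N} = Pow {0..<N}"
    using nths_in_del_outputs[OF x] length_del_input[OF x] by auto
  have "(\<Sum>y\<in>del_outputs q N. del_trans d x y * 1) = (\<Sum>S\<in>Pow {0..<N}. del_weight d N S * 1)"
    using sum_del_trans_eq_sum_patterns[OF finite_del_outputs, of d x "\<lambda>_. 1" q N] patterns
      length_del_input[OF x] by simp
  then show "(\<Sum>y\<in>del_outputs q N. del_trans d x y) = 1"
    using del_weight_sums[of d N] by simp
  have "length (nths x S) = card S" if "S \<subseteq> {0..<N}" for S
    unfolding length_nths using that length_del_input[OF x] by (intro arg_cong[where f = card]) auto
  then have "(\<Sum>y\<in>del_outputs q N. del_trans d x y * real (length y)) =
      (\<Sum>S\<in>Pow {0..<N}. del_weight d N S * real (card S))"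
    using sum_del_trans_eq_sum_patterns[OF finite_del_outputs, of d x "\<lambda>y. real (length y)" q N]
      patterns length_del_input[OF x] by simp
  then show "(\<Sum>y\<in>del_outputs q N. del_trans d x y * length y) = N * (1 - d)"
    using del_weight_sums[of d N] by simp
qed

lemma input_dist_nonneg: "P \<in> del_input_dists q N \<Longrightarrow> 0 \<le> P x"
  by (simp add: del_input_dists_def)

lemma sum_input_dist: "P \<in> del_input_dists q N \<Longrightarrow> (\<Sum>x\<in>del_inputs q N. P x) = 1"
  by (simp add: del_input_dists_def)

lemma del_output_prob_nonneg:
  "P \<in> del_input_dists q N \<Longrightarrow> 0 \<le> d \<Longrightarrow> d \<le> 1 \<Longrightarrow> 0 \<le> del_output_prob q N d P y"
  unfolding del_output_prob_def
  by (intro sum_nonneg mult_nonneg_nonneg) (auto simp: input_dist_nonneg del_trans_nonneg)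

lemma joint_le_del_output_prob:
  "P \<in> del_input_dists q N \<Longrightarrow> 0 \<le> d \<Longrightarrow> d \<le> 1 \<Longrightarrow> x \<in> del_inputs q N \<Longrightarrow>
   P x * del_trans d x y \<le> del_output_prob q N d P y"
  unfolding del_output_prob_def
  by (rule member_le_sum) (auto simp: finite_del_inputs input_dist_nonneg del_trans_nonneg)

lemma del_output_prob_pos:
  "P \<in> del_input_dists q N \<Longrightarrow> 0 \<le> d \<Longrightarrow> d \<le> 1 \<Longrightarrow> x \<in> del_inputs q N \<Longrightarrow>
   P x * del_trans d x y > 0 \<Longrightarrow> del_output_prob q N d P y > 0"
  using joint_le_del_output_prob[of P q N d x y] by linarith

lemma sum_del_output_prob:
  "P \<in> del_input_dists q N \<Longrightarrow> (\<Sum>y\<in>del_outputs q N. del_output_prob q N d P y) = 1"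
  unfolding del_output_prob_def
  by (subst sum.swap) (simp add: sum_distrib_left[symmetric] sum_del_trans sum_input_dist cong: sum.cong)

lemma sum_joint_del_trans:
  "P \<in> del_input_dists q N \<Longrightarrow>
   (\<Sum>x\<in>del_inputs q N. \<Sum>y\<in>del_outputs q N. P x * del_trans d x y) = 1"
  by (simp add: sum_distrib_left[symmetric] sum_del_trans sum_input_dist cong: sum.cong)

lemma sum_del_output_prob_length:
  assumes P: "P \<in> del_input_dists q N"
  shows "(\<Sum>y\<in>del_outputs q N. del_output_prob q N d P y * length y) = N * (1 - d)"
proof -
  have "(\<Sum>y\<in>del_outputs q N. del_output_prob q N d P y * length y) =
      (\<Sum>x\<in>del_inputs q N. P x * (\<Sum>y\<in>del_outputs q N. del_trans d x y * length y))"
    unfolding del_output_prob_def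
    by (simp add: sum_distrib_left sum_distrib_right mult.assoc) (rule sum.swap)
  also have "\<dots> = (\<Sum>x\<in>del_inputs q N. P x * (N * (1 - d)))"
    by (intro sum.cong refl) (simp add: sum_del_trans_length)
  also have "\<dots> = N * (1 - d)"
    using sum_input_dist[OF P] by (simp add: sum_distrib_right[symmetric])
  finally show ?thesis .
qed

lemma del_mutual_info_eq: "del_mutual_info b q N d P = (\<Sum>x\<in>del_inputs q N. \<Sum>y\<in>del_outputs q N.
        P x * del_trans d x y * log b (del_trans d x y / del_output_prob q N d P y))"
  unfolding del_mutual_info_def by (intro sum.cong refl) auto


lemma log_le_log_of_le:
  assumes "b > 1" "0 \<le> x" "x \<le> y" "1 \<le> y"
  shows "log b x \<le> log b y"
proof (cases "x = 0")
  case True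
  then show ?thesis using assms by (auto simp: log_def intro!: divide_nonneg_pos)
next
  case False
  then show ?thesis using assms by (subst log_le_cancel_iff) auto
qed

lemma sum_log_ratio_le_log_card:
  fixes a :: "'a \<Rightarrow> real"
  assumes A: "finite A" and nonneg: "\<And>i. i \<in> A \<Longrightarrow> 0 \<le> a i" and b: "b > 1"
  shows "(\<Sum>i\<in>A. a i * log b (sum a A / a i)) \<le> sum a A * log b (card A)"
proof (cases "A = {}")
  case True then show ?thesis by simp
next
  case False
  define n where "n = real (card A)"
  define S where "S = sum a A"
  have n: "n > 0" using False A by (simp add: n_def card_gt_0_iff)
  have S: "S \<ge> 0" unfolding S_def by (rule sum_nonneg) (use nonneg in auto)
  have lnb: "ln b > 0" using b by simp
  have "a i * log b (S / a i) \<le> (S / n - a i) / ln b + a i * log b n" if i: "i \<in> A" for i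
  proof (cases "a i = 0")
    case True then show ?thesis using S n lnb by simp
  next
    case False
    then have ai: "a i > 0" using nonneg[OF i] by simp
    have "S \<ge> a i" unfolding S_def by (rule member_le_sum[OF i]) (use nonneg A in auto)
    then have S_pos: "S > 0" using ai by simp
    have "a i * log b (S / a i) = a i * (ln (S / (n * a i)) / ln b) + a i * log b n"
      using ai S_pos n lnb by (simp add: log_def ln_div ln_mult field_simps)
    also have "ln (S / (n * a i)) \<le> S / (n * a i) - 1"
      by (rule ln_le_minus_one) (use ai S_pos n in simp)
    then have "a i * (ln (S / (n * a i)) / ln b) \<le> a i * ((S / (n * a i) - 1) / ln b)"
      using ai lnb by (intro mult_left_mono divide_right_mono) auto
    also have "a i * ((S / (n * a i) - 1) / ln b) = (S / n - a i) / ln b"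
      using ai n lnb by (simp add: field_simps)
    finally show ?thesis by simp
  qed
  then have "(\<Sum>i\<in>A. a i * log b (S / a i)) \<le> (\<Sum>i\<in>A. (S / n - a i) / ln b + a i * log b n)"
    by (rule sum_mono)
  also have "\<dots> = (n * (S / n) - S) / ln b + S * log b n"
    by (simp add: sum.distrib sum_divide_distrib[symmetric] sum_subtractf S_def n_def
        sum_distrib_right[symmetric])
  also have "\<dots> = S * log b n" using n by simp
  finally show ?thesis by (simp add: S_def n_def)
qed

lemma del_mutual_info_le_log:
  assumes P: "P \<in> del_input_dists q N" and d: "0 \<le> d" "d \<le> 1" and b: "b > 1" and q: "q \<ge> 1"
  shows "del_mutual_info b q N d P \<le> N * log b q"
proof -
  let ?W = "del_trans d" and ?Q = "del_output_prob q N d P"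
  have "P x * ?W x y * log b (?W x y / ?Q y) \<le> P x * ?W x y * log b (1 / P x)"
    if x: "x \<in> del_inputs q N" for x y
  proof (cases "P x * ?W x y = 0")
    case True then show ?thesis by (simp only: True)
  next
    case False
    then have PW_pos: "P x * ?W x y > 0"
      using input_dist_nonneg[OF P, of x] del_trans_nonneg[OF d, of x y] by (simp add: less_le)
    then have P_pos: "P x > 0" and W_pos: "?W x y > 0"
      using input_dist_nonneg[OF P, of x] del_trans_nonneg[OF d, of x y] by (auto simp: zero_less_mult_iff)
    have Q_pos: "?Q y > 0" by (rule del_output_prob_pos[OF P d x PW_pos])
    have "?W x y / ?Q y \<le> ?W x y / (P x * ?W x y)"
      by (rule divide_left_mono) (use joint_le_del_output_prob[OF P d x] PW_pos W_pos Q_pos in auto)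
    also have "\<dots> = 1 / P x" using W_pos by simp
    finally have "log b (?W x y / ?Q y) \<le> log b (1 / P x)"
      using b W_pos Q_pos P_pos by (subst log_le_cancel_iff) auto
    then show ?thesis using PW_pos by (intro mult_left_mono) auto
  qed
  then have "del_mutual_info b q N d P \<le>
      (\<Sum>x\<in>del_inputs q N. \<Sum>y\<in>del_outputs q N. P x * ?W x y * log b (1 / P x))"
    unfolding del_mutual_info_eq by (intro sum_mono)
  also have "\<dots> = (\<Sum>x\<in>del_inputs q N. P x * log b (1 / P x) * (\<Sum>y\<in>del_outputs q N. ?W x y))"
    by (simp add: sum_distrib_left mult_ac)
  also have "\<dots> = (\<Sum>x\<in>del_inputs q N. P x * log b (sum P (del_inputs q N) / P x))"
    by (simp add: sum_del_trans sum_input_dist[OF P])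
  also have "\<dots> \<le> sum P (del_inputs q N) * log b (card (del_inputs q N))"
    by (rule sum_log_ratio_le_log_card[OF finite_del_inputs _ b]) (rule input_dist_nonneg[OF P])
  also have "\<dots> = N * log b q"
    using q b by (simp add: sum_input_dist[OF P] card_del_inputs log_nat_power)
  finally show ?thesis .
qed

lemma point_mass_in_input_dists:
  "x0 \<in> del_inputs q N \<Longrightarrow> (\<lambda>x. if x = x0 then 1 else 0) \<in> del_input_dists q N"
  by (auto simp: del_input_dists_def finite_del_inputs)

lemma del_mutual_info_point_mass:
  assumes "x0 \<in> del_inputs q N"
  shows "del_mutual_info b q N d (\<lambda>x. if x = x0 then 1 else 0) = 0"
proof -
  have "del_output_prob q N d (\<lambda>x. if x = x0 then 1 else 0) y =
      (\<Sum>x\<in>del_inputs q N. if x = x0 then del_trans d x0 y else 0)" for y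
    unfolding del_output_prob_def by (intro sum.cong) auto
  then have "del_output_prob q N d (\<lambda>x. if x = x0 then 1 else 0) y = del_trans d x0 y" for y
    using assms by (simp add: finite_del_inputs)
  then show ?thesis
    unfolding del_mutual_info_eq by (intro sum.neutral ballI) auto
qed

lemma
  assumes d: "0 \<le> d" "d \<le> 1" and b: "b > 1" and q: "q \<ge> 1"
  shows del_mutual_info_le_max_info:
      "P \<in> del_input_dists q N \<Longrightarrow> del_mutual_info b q N d P \<le> del_max_info b q N d"
    and del_max_info_nonneg: "0 \<le> del_max_info b q N d"
proof -
  have bdd: "bdd_above ((\<lambda>P. del_mutual_info b q N d P) ` del_input_dists q N)"
    using del_mutual_info_le_log[OF _ d b q] by (intro bdd_aboveI2) auto
  show le_max: "del_mutual_info b q N d P \<le> del_max_info b q N d"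
    if "P \<in> del_input_dists q N" for P
    unfolding del_max_info_def by (rule cSUP_upper[OF that bdd])
  have "replicate N 1 \<in> del_inputs q N" using q by (auto simp: del_inputs_def)
  then show "0 \<le> del_max_info b q N d"
    using le_max[OF point_mass_in_input_dists] del_mutual_info_point_mass by metis
qed

lemma del_max_info_le:
  assumes "q \<ge> 1" and "\<And>P. P \<in> del_input_dists q N \<Longrightarrow> del_mutual_info b q N d P \<le> M"
  shows "del_max_info b q N d \<le> M"
proof -
  have "replicate N 1 \<in> del_inputs q N" using assms(1) by (auto simp: del_inputs_def)
  then have "del_input_dists q N \<noteq> {}" using point_mass_in_input_dists by blast
  then show ?thesis unfolding del_max_info_def by (rule cSUP_least) (rule assms(2))
qed

lemma del_max_info_le_log:
  assumes "0 \<le> d" "d \<le> 1" "b > 1" "q \<ge> 1"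
  shows "del_max_info b q N d \<le> N * log b q"
  by (rule del_max_info_le[OF assms(4)]) (rule del_mutual_info_le_log[OF _ assms])


section \<open>Merging symbols\<close>

lemma finite_map_preimage: "finite A \<Longrightarrow> finite {xs. set xs \<subseteq> A \<and> map f xs = ys}"
  by (rule finite_subset[of _ "{xs. set xs \<subseteq> A \<and> length xs = length ys}"])
    (auto simp: finite_lists_length_eq)

lemma card_map_preimage_le:
  assumes A: "finite A" and fibres: "\<And>c. card {a\<in>A. f a = c} \<le> K"
  shows "card {xs. set xs \<subseteq> A \<and> map f xs = ys} \<le> K ^ length ys"
proof (induction ys)
  case Nil
  have "{xs. set xs \<subseteq> A \<and> map f xs = []} = {[]}" by auto
  then show ?case by simp
next
  case (Cons c ys)
  let ?F = "{a\<in>A. f a = c}" and ?L = "{xs. set xs \<subseteq> A \<and> map f xs = ys}"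
  have "{xs. set xs \<subseteq> A \<and> map f xs = c # ys} = (\<lambda>(a, xs). a # xs) ` (?F \<times> ?L)"
    by (force simp: map_eq_Cons_conv)
  moreover have "finite (?F \<times> ?L)" using A by (simp add: finite_map_preimage)
  ultimately have "card {xs. set xs \<subseteq> A \<and> map f xs = c # ys} \<le> card (?F \<times> ?L)"
    by (simp add: card_image_le)
  also have "\<dots> = card ?F * card ?L" by (rule card_cartesian_product)
  also have "\<dots> \<le> K * K ^ length ys" by (intro mult_le_mono fibres Cons.IH)
  finally show ?case by simp
qed

lemma del_trans_map:
  assumes x: "x \<in> del_inputs q N"
  shows "del_trans d (map f x) y' = (\<Sum>y\<in>{y\<in>del_outputs q N. map f y = y'}. del_trans d x y)"
proof -
  have "(\<Sum>y\<in>{y\<in>del_outputs q N. map f y = y'}. del_trans d x y * 1) =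
     (\<Sum>S\<in>{S. S \<subseteq> {0..<length x} \<and> nths x S \<in> {y\<in>del_outputs q N. map f y = y'}}.
        del_weight d (length x) S * 1)"
    by (rule sum_del_trans_eq_sum_patterns) (simp add: finite_del_outputs)
  also have "{S. S \<subseteq> {0..<length x} \<and> nths x S \<in> {y\<in>del_outputs q N. map f y = y'}} =
      {S. S \<subseteq> {0..<length (map f x)} \<and> nths (map f x) S = y'}"
    using nths_in_del_outputs[OF x] by (auto simp: nths_map)
  finally show ?thesis by (simp add: del_trans_eq_sum_weight)
qed

lemma del_trans_le_del_trans_map:
  assumes "x \<in> del_inputs q N" "y \<in> del_outputs q N" "0 \<le> d" "d \<le> 1"
  shows "del_trans d x y \<le> del_trans d (map f x) (map f y)"
  unfolding del_trans_map[OF assms(1)]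
  by (rule member_le_sum) (auto simp: assms del_trans_nonneg finite_del_outputs)

lemma sum_fiberwise:
  assumes "finite A" "finite B" "k ` A \<subseteq> B"
  shows "(\<Sum>a\<in>A. g a (k a)) = (\<Sum>b\<in>B. \<Sum>a\<in>{a\<in>A. k a = b}. g a b)"
proof -
  have "(\<Sum>a\<in>A. g a (k a)) = (\<Sum>b\<in>B. \<Sum>a\<in>{a\<in>A. k a = b}. g a (k a))"
    by (rule sum.group[symmetric]) (use assms in auto)
  also have "\<dots> = (\<Sum>b\<in>B. \<Sum>a\<in>{a\<in>A. k a = b}. g a b)"
    by (intro sum.cong refl) auto
  finally show ?thesis .
qed

definition push_dist :: "(nat \<Rightarrow> nat) \<Rightarrow> nat \<Rightarrow> nat \<Rightarrow> (nat list \<Rightarrow> real) \<Rightarrow> nat list \<Rightarrow> real" where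
  "push_dist f q N P x' = (\<Sum>x\<in>{x\<in>del_inputs q N. map f x = x'}. P x)"

context
  fixes f :: "nat \<Rightarrow> nat" and q q' :: nat
  assumes maps: "f ` {1..q} \<subseteq> {1..q'}"
begin

lemma map_in_del_inputs: "x \<in> del_inputs q N \<Longrightarrow> map f x \<in> del_inputs q' N"
  using maps by (auto simp: del_inputs_def)

lemma map_in_del_outputs: "y \<in> del_outputs q N \<Longrightarrow> map f y \<in> del_outputs q' N"
  using maps by (auto simp: del_outputs_def)

lemma push_dist_in_input_dists:
  assumes P: "P \<in> del_input_dists q N"
  shows "push_dist f q N P \<in> del_input_dists q' N"
proof -
  have "(\<Sum>x'\<in>del_inputs q' N. push_dist f q N P x') = (\<Sum>x\<in>del_inputs q N. P x)"
    unfolding push_dist_def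
    by (rule sum_fiberwise[where g = "\<lambda>x _. P x", symmetric])
      (auto simp: finite_del_inputs map_in_del_inputs)
  moreover have "push_dist f q N P x' = 0" if "x' \<notin> del_inputs q' N" for x'
    unfolding push_dist_def using that map_in_del_inputs by (intro sum.neutral) auto
  ultimately show ?thesis
    using input_dist_nonneg[OF P] sum_input_dist[OF P]
    by (auto simp: del_input_dists_def push_dist_def intro: sum_nonneg)
qed

lemma sum_joint_map_eq_push_dist:
  "(\<Sum>x\<in>del_inputs q N. \<Sum>y\<in>del_outputs q N. P x * del_trans d x y * h (map f x) (map f y)) =
   (\<Sum>x'\<in>del_inputs q' N. \<Sum>y'\<in>del_outputs q' N. push_dist f q N P x' * del_trans d x' y' * h x' y')"
proof -
  have inner: "(\<Sum>y\<in>del_outputs q N. P x * del_trans d x y * h (map f x) (map f y)) =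
      P x * (\<Sum>y'\<in>del_outputs q' N. del_trans d (map f x) y' * h (map f x) y')"
    if x: "x \<in> del_inputs q N" for x
  proof -
    have "(\<Sum>y\<in>del_outputs q N. P x * del_trans d x y * h (map f x) (map f y)) =
        (\<Sum>y'\<in>del_outputs q' N. \<Sum>y\<in>{y\<in>del_outputs q N. map f y = y'}.
           P x * del_trans d x y * h (map f x) y')"
      by (rule sum_fiberwise[where g = "\<lambda>y y'. P x * del_trans d x y * h (map f x) y'"])
        (auto simp: finite_del_outputs map_in_del_outputs)
    also have "\<dots> = P x * (\<Sum>y'\<in>del_outputs q' N. del_trans d (map f x) y' * h (map f x) y')"
      by (simp add: del_trans_map[OF x] sum_distrib_left sum_distrib_right mult.assoc)
    finally show ?thesis .
  qed
  have "(\<Sum>x\<in>del_inputs q N. \<Sum>y\<in>del_outputs q N. P x * del_trans d x y * h (map f x) (map f y)) =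
      (\<Sum>x\<in>del_inputs q N. P x * (\<Sum>y'\<in>del_outputs q' N. del_trans d (map f x) y' * h (map f x) y'))"
    by (rule sum.cong[OF refl]) (rule inner)
  also have "\<dots> = (\<Sum>x'\<in>del_inputs q' N. \<Sum>x\<in>{x\<in>del_inputs q N. map f x = x'}.
         P x * (\<Sum>y'\<in>del_outputs q' N. del_trans d x' y' * h x' y'))"
    by (rule sum_fiberwise[where g = "\<lambda>x x'. P x * (\<Sum>y'\<in>del_outputs q' N. del_trans d x' y' * h x' y')"])
      (auto simp: finite_del_inputs map_in_del_inputs)
  also have "\<dots> = (\<Sum>x'\<in>del_inputs q' N. \<Sum>y'\<in>del_outputs q' N.
      push_dist f q N P x' * del_trans d x' y' * h x' y')"
    unfolding push_dist_def sum_distrib_right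
    by (rule sum.cong[OF refl], subst sum.swap) (simp add: sum_distrib_left mult.assoc)
  finally show ?thesis .
qed

lemma del_output_prob_push_dist:
  "del_output_prob q' N d (push_dist f q N P) y' =
   (\<Sum>y\<in>{y\<in>del_outputs q N. map f y = y'}. del_output_prob q N d P y)"
proof -
  have "del_output_prob q' N d (push_dist f q N P) y' =
      (\<Sum>x\<in>del_inputs q N. P x * del_trans d (map f x) y')"
    unfolding del_output_prob_def push_dist_def sum_distrib_right
    by (rule sum_fiberwise[where g = "\<lambda>x x'. P x * del_trans d x' y'", symmetric])
      (auto simp: finite_del_inputs map_in_del_inputs)
  also have "\<dots> = (\<Sum>x\<in>del_inputs q N. \<Sum>y\<in>{y\<in>del_outputs q N. map f y = y'}. P x * del_trans d x y)"
    by (intro sum.cong refl) (simp add: del_trans_map sum_distrib_left)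
  also have "\<dots> = (\<Sum>y\<in>{y\<in>del_outputs q N. map f y = y'}. del_output_prob q N d P y)"
    unfolding del_output_prob_def by (rule sum.swap)
  finally show ?thesis .
qed

lemma sum_joint_log_merge_ratio_le:
  assumes P: "P \<in> del_input_dists q N" and d: "0 \<le> d" "d \<le> 1" and b: "b > 1"
    and K: "K \<ge> 1" and fibres: "\<And>c. card {s\<in>{1..q}. f s = c} \<le> K"
  shows "(\<Sum>x\<in>del_inputs q N. \<Sum>y\<in>del_outputs q N. P x * del_trans d x y *
            log b (del_output_prob q' N d (push_dist f q N P) (map f y) / del_output_prob q N d P y))
         \<le> N * (1 - d) * log b K"
proof -
  let ?Q = "del_output_prob q N d P" and ?Q' = "del_output_prob q' N d (push_dist f q N P)"
  let ?fibre = "\<lambda>y'. {y\<in>del_outputs q N. map f y = y'}"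
  have Q'_nonneg: "0 \<le> ?Q' y'" for y'
    by (rule del_output_prob_nonneg[OF push_dist_in_input_dists[OF P] d])
  have log_card_fibre: "log b (card (?fibre y')) \<le> length y' * log b K" for y'
  proof -
    have "card (?fibre y') \<le> card {xs. set xs \<subseteq> {1..q} \<and> map f xs = y'}"
      by (rule card_mono[OF finite_map_preimage]) (auto simp: del_outputs_def)
    also have "\<dots> \<le> K ^ length y'" by (rule card_map_preimage_le[OF _ fibres]) simp
    finally have "log b (card (?fibre y')) \<le> log b (real K ^ length y')"
      using K b by (intro log_le_log_of_le) (auto simp flip: of_nat_power)
    also have "\<dots> = length y' * log b K" using K b by (simp add: log_nat_power)
    finally show ?thesis .
  qed
  have "(\<Sum>x\<in>del_inputs q N. \<Sum>y\<in>del_outputs q N. P x * del_trans d x y * log b (?Q' (map f y) / ?Q y))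
      = (\<Sum>y\<in>del_outputs q N. ?Q y * log b (?Q' (map f y) / ?Q y))"
    by (subst sum.swap) (simp add: del_output_prob_def[of q N d P] sum_distrib_right)
  also have "\<dots> = (\<Sum>y'\<in>del_outputs q' N. \<Sum>y\<in>?fibre y'. ?Q y * log b (?Q' y' / ?Q y))"
    by (rule sum_fiberwise[where g = "\<lambda>y y'. ?Q y * log b (?Q' y' / ?Q y)"])
      (auto simp: finite_del_outputs map_in_del_outputs)
  also have "\<dots> \<le> (\<Sum>y'\<in>del_outputs q' N. ?Q' y' * (length y' * log b K))"
  proof (rule sum_mono)
    fix y'
    have "(\<Sum>y\<in>?fibre y'. ?Q y * log b (?Q' y' / ?Q y)) \<le> ?Q' y' * log b (card (?fibre y'))"
      using sum_log_ratio_le_log_card[of "?fibre y'" ?Q b] del_output_prob_nonneg[OF P d] b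
      by (simp add: finite_del_outputs del_output_prob_push_dist)
    also have "\<dots> \<le> ?Q' y' * (length y' * log b K)"
      by (rule mult_left_mono[OF log_card_fibre Q'_nonneg])
    finally show "(\<Sum>y\<in>?fibre y'. ?Q y * log b (?Q' y' / ?Q y)) \<le> ?Q' y' * (length y' * log b K)" .
  qed
  also have "\<dots> = (\<Sum>y'\<in>del_outputs q' N. ?Q' y' * length y') * log b K"
    by (simp add: sum_distrib_right mult.assoc)
  also have "\<dots> = N * (1 - d) * log b K"
    by (simp add: sum_del_output_prob_length[OF push_dist_in_input_dists[OF P]])
  finally show ?thesis .
qed

lemma del_mutual_info_le_push_dist:
  assumes P: "P \<in> del_input_dists q N" and d: "0 \<le> d" "d \<le> 1" and b: "b > 1"
    and K: "K \<ge> 1" and fibres: "\<And>c. card {s\<in>{1..q}. f s = c} \<le> K"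
  shows "del_mutual_info b q N d P \<le> del_mutual_info b q' N d (push_dist f q N P) + N * (1 - d) * log b K"
proof -
  let ?W = "del_trans d" and ?Q = "del_output_prob q N d P"
  let ?Q' = "del_output_prob q' N d (push_dist f q N P)"
  have pointwise: "P x * ?W x y * log b (?W x y / ?Q y) \<le>
      P x * ?W x y * log b (?W (map f x) (map f y) / ?Q' (map f y)) +
      P x * ?W x y * log b (?Q' (map f y) / ?Q y)"
    if x: "x \<in> del_inputs q N" and y: "y \<in> del_outputs q N" for x y
  proof (cases "P x * ?W x y = 0")
    case True then show ?thesis by (simp only: True)
  next
    case False
    then have PW_pos: "P x * ?W x y > 0"
      using input_dist_nonneg[OF P, of x] del_trans_nonneg[OF d, of x y] by (simp add: less_le)
    then have W_pos: "?W x y > 0"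
      using input_dist_nonneg[OF P, of x] del_trans_nonneg[OF d, of x y] by (auto simp: zero_less_mult_iff)
    have Q_pos: "?Q y > 0" by (rule del_output_prob_pos[OF P d x PW_pos])
    have W_le: "?W x y \<le> ?W (map f x) (map f y)"
      by (rule del_trans_le_del_trans_map[OF x y d])
    have "?Q y \<le> ?Q' (map f y)"
      unfolding del_output_prob_push_dist
      by (rule member_le_sum) (use y del_output_prob_nonneg[OF P d] finite_del_outputs in auto)
    then have "log b (?W x y / ?Q y) \<le> log b (?W (map f x) (map f y) / ?Q' (map f y)) + log b (?Q' (map f y) / ?Q y)"
      using W_pos Q_pos W_le b by (simp add: log_divide)
    then show ?thesis
      unfolding distrib_left[symmetric] by (rule mult_left_mono) (use PW_pos in simp)
  qed
  have "del_mutual_info b q N d P \<le>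
      (\<Sum>x\<in>del_inputs q N. \<Sum>y\<in>del_outputs q N. P x * ?W x y * log b (?W (map f x) (map f y) / ?Q' (map f y)))
      + (\<Sum>x\<in>del_inputs q N. \<Sum>y\<in>del_outputs q N. P x * ?W x y * log b (?Q' (map f y) / ?Q y))"
    unfolding del_mutual_info_eq sum.distrib[symmetric] by (intro sum_mono pointwise)
  also have "\<dots> \<le> del_mutual_info b q' N d (push_dist f q N P) + N * (1 - d) * log b K"
    using sum_joint_map_eq_push_dist[where h = "\<lambda>x' y'. log b (?W x' y' / ?Q' y')"]
      sum_joint_log_merge_ratio_le[OF P d b K fibres]
    by (simp add: del_mutual_info_eq)
  finally show ?thesis .
qed

end


section \<open>Concatenating inputs\<close>

lemma nths_inter_atLeastLessThan_length: "nths xs (A \<inter> {0..<length xs}) = nths xs A"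
proof (induction xs arbitrary: A)
  case Nil then show ?case by simp
next
  case (Cons x xs)
  have "{j. Suc j \<in> A \<inter> {0..<length (x # xs)}} = {j. Suc j \<in> A} \<inter> {0..<length xs}" by auto
  then show ?case by (simp add: nths_Cons Cons.IH)
qed

lemma nths_append_split:
  "nths (x1 @ x2) S = nths x1 (S \<inter> {0..<length x1}) @ nths x2 {j. j + length x1 \<in> S}"
  by (simp add: nths_append nths_inter_atLeastLessThan_length)

lemma Int_Un_shift_eq:
  fixes S :: "nat set"
  shows "S \<inter> {0..<a} \<union> (\<lambda>j. j + a) ` {j. j + a \<in> S} = S"
proof (intro set_eqI iffI)
  fix s assume s: "s \<in> S"
  show "s \<in> S \<inter> {0..<a} \<union> (\<lambda>j. j + a) ` {j. j + a \<in> S}"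
  proof (cases "s < a")
    case False
    then have "s = (s - a) + a" by simp
    then show ?thesis using s by (metis (mono_tags) UnI2 image_eqI mem_Collect_eq)
  qed (use s in simp)
qed auto

lemma bij_betw_split_Pow:
  fixes a c :: nat
  shows "bij_betw (\<lambda>S. (S \<inter> {0..<a}, {j. j + a \<in> S})) (Pow {0..<a + c}) (Pow {0..<a} \<times> Pow {0..<c})"
  by (rule bij_betw_byWitness[where f' = "\<lambda>(S1, S2). S1 \<union> (\<lambda>j. j + a) ` S2"])
    (auto simp: Int_Un_shift_eq)

lemma del_weight_split:
  fixes a c :: nat
  assumes S: "S \<subseteq> {0..<a + c}"
  shows "del_weight d (a + c) S = del_weight d a (S \<inter> {0..<a}) * del_weight d c {j. j + a \<in> S}"
proof -
  let ?S1 = "S \<inter> {0..<a}" and ?S2 = "{j. j + a \<in> S}"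
  have S2: "?S2 \<subseteq> {0..<c}" using S by auto
  have "card S = card (?S1 \<union> (\<lambda>j. j + a) ` ?S2)"
    by (simp only: Int_Un_shift_eq)
  also have "\<dots> = card ?S1 + card ((\<lambda>j. j + a) ` ?S2)"
    by (rule card_Un_disjoint) (use S2 finite_subset in auto)
  also have "card ((\<lambda>j. j + a) ` ?S2) = card ?S2" by (rule card_image) (auto simp: inj_on_def)
  finally have card_S: "card S = card ?S1 + card ?S2" .
  have "card ?S1 \<le> a" "card ?S2 \<le> c"
    using card_mono[of "{0..<a}" ?S1] card_mono[OF _ S2] by auto
  then have "a + c - card S = (a - card ?S1) + (c - card ?S2)"
    unfolding card_S by simp
  then show ?thesis
    unfolding del_weight_def by (simp add: card_S power_add)
qed

lemma del_trans_eq_sum_Pow: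
  "del_trans d x y = (\<Sum>S\<in>Pow {0..<length x}. if nths x S = y then del_weight d (length x) S else 0)"
proof -
  have "{S. S \<subseteq> {0..<length x} \<and> nths x S = y} = {S \<in> Pow {0..<length x}. nths x S = y}" by auto
  then show ?thesis unfolding del_trans_eq_sum_weight by (simp only:) (rule sum.inter_filter, simp)
qed

lemma if_append_eq_sum_split:
  fixes p r :: real
  shows "(if u @ v = y then p * r else 0) =
    (\<Sum>i\<in>{0..length y}. (if u = take i y then p else 0) * (if v = drop i y then r else 0))"
proof (cases "u @ v = y")
  case True
  have "(if u = take i y then p else 0) * (if v = drop i y then r else 0) =
      (if i = length u then p * r else 0)" if "i \<le> length y" for i
  proof (cases "i = length u")
    case True
    then show ?thesis using \<open>u @ v = y\<close> by auto
  next
    case False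
    then have "u \<noteq> take i y" using that by auto
    then show ?thesis using False by simp
  qed
  then have "(\<Sum>i\<in>{0..length y}. (if u = take i y then p else 0) * (if v = drop i y then r else 0)) =
      (\<Sum>i\<in>{0..length y}. if i = length u then p * r else 0)"
    by (intro sum.cong) auto
  moreover have "length u \<le> length y" using True by auto
  ultimately show ?thesis using True by simp
next
  case False
  then have "(if u = take i y then p else 0) * (if v = drop i y then r else 0) = 0" for i
    by auto
  then have "(\<Sum>i\<in>{0..length y}. (if u = take i y then p else 0) * (if v = drop i y then r else 0)) = 0"
    by (simp only: sum.neutral_const)
  then show ?thesis using False by simp
qed

lemma del_trans_append:
  "del_trans d (x1 @ x2) y = (\<Sum>i\<in>{0..length y}. del_trans d x1 (take i y) * del_trans d x2 (drop i y))"
proof -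
  let ?a = "length x1" and ?c = "length x2"
  let ?w1 = "\<lambda>S1 i. if nths x1 S1 = take i y then del_weight d ?a S1 else 0"
  let ?w2 = "\<lambda>S2 i. if nths x2 S2 = drop i y then del_weight d ?c S2 else 0"
  let ?g = "\<lambda>(S1, S2). if nths x1 S1 @ nths x2 S2 = y then del_weight d ?a S1 * del_weight d ?c S2 else 0"
  have "del_trans d (x1 @ x2) y = (\<Sum>S\<in>Pow {0..<?a + ?c}. ?g (S \<inter> {0..<?a}, {j. j + ?a \<in> S}))"
    unfolding del_trans_eq_sum_Pow by (intro sum.cong) (auto simp: nths_append_split del_weight_split)
  also have "\<dots> = (\<Sum>p\<in>Pow {0..<?a} \<times> Pow {0..<?c}. ?g p)"
    by (rule sum.reindex_bij_betw[OF bij_betw_split_Pow])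
  also have "\<dots> = (\<Sum>S1\<in>Pow {0..<?a}. \<Sum>S2\<in>Pow {0..<?c}. \<Sum>i\<in>{0..length y}. ?w1 S1 i * ?w2 S2 i)"
    unfolding sum.cartesian_product[symmetric]
    by (intro sum.cong refl) (simp only: prod.case if_append_eq_sum_split)
  also have "\<dots> = (\<Sum>S1\<in>Pow {0..<?a}. \<Sum>i\<in>{0..length y}. \<Sum>S2\<in>Pow {0..<?c}. ?w1 S1 i * ?w2 S2 i)"
    by (intro sum.cong refl) (rule sum.swap)
  also have "\<dots> = (\<Sum>i\<in>{0..length y}. \<Sum>S1\<in>Pow {0..<?a}. \<Sum>S2\<in>Pow {0..<?c}. ?w1 S1 i * ?w2 S2 i)"
    by (rule sum.swap)
  also have "\<dots> = (\<Sum>i\<in>{0..length y}. (\<Sum>S1\<in>Pow {0..<?a}. ?w1 S1 i) * (\<Sum>S2\<in>Pow {0..<?c}. ?w2 S2 i))"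
    by (simp only: sum_product)
  also have "\<dots> = (\<Sum>i\<in>{0..length y}. del_trans d x1 (take i y) * del_trans d x2 (drop i y))"
    by (simp add: del_trans_eq_sum_Pow)
  finally show ?thesis .
qed


definition split_points :: "nat \<Rightarrow> nat \<Rightarrow> nat list \<Rightarrow> nat set" where
  "split_points a c y = {i. i \<le> a \<and> i \<le> length y \<and> length y - i \<le> c}"

lemma finite_split_points: "finite (split_points a c y)"
  by (simp add: split_points_def)

lemma card_split_points_le: "card (split_points a c y) \<le> a + 1"
proof -
  have "card (split_points a c y) \<le> card {0..a}" by (rule card_mono) (auto simp: split_points_def)
  then show ?thesis by simp
qed

lemma del_trans_append_split_points:
  assumes x1: "x1 \<in> del_inputs q a" and x2: "x2 \<in> del_inputs q c"
  shows "del_trans d (x1 @ x2) y =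
    (\<Sum>i\<in>split_points a c y. del_trans d x1 (take i y) * del_trans d x2 (drop i y))"
  unfolding del_trans_append
proof (rule sum.mono_neutral_right)
  show "\<forall>i\<in>{0..length y} - split_points a c y. del_trans d x1 (take i y) * del_trans d x2 (drop i y) = 0"
  proof
    fix i assume "i \<in> {0..length y} - split_points a c y"
    then have "take i y \<notin> del_outputs q a \<or> drop i y \<notin> del_outputs q c"
      by (auto simp: split_points_def del_outputs_def)
    then show "del_trans d x1 (take i y) * del_trans d x2 (drop i y) = 0"
      using del_trans_eq_0[OF x1] del_trans_eq_0[OF x2] by auto
  qed
qed (auto simp: split_points_def)

lemma sum_del_outputs_split_points:
  "(\<Sum>y\<in>del_outputs q (a + c). \<Sum>i\<in>split_points a c y. F (take i y) (drop i y)) =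
   (\<Sum>y1\<in>del_outputs q a. \<Sum>y2\<in>del_outputs q c. F y1 y2)"
proof -
  have "(\<Sum>y\<in>del_outputs q (a + c). \<Sum>i\<in>split_points a c y. F (take i y) (drop i y)) =
      (\<Sum>(y, i)\<in>Sigma (del_outputs q (a + c)) (split_points a c). F (take i y) (drop i y))"
    by (rule sum.Sigma) (auto simp: finite_del_outputs finite_split_points)
  also have "\<dots> = (\<Sum>(y1, y2)\<in>del_outputs q a \<times> del_outputs q c. F y1 y2)"
  proof (rule sum.reindex_bij_witness[where i = "\<lambda>(y1, y2). (y1 @ y2, length y1)"
        and j = "\<lambda>(y, i). (take i y, drop i y)"])
    fix p assume "p \<in> Sigma (del_outputs q (a + c)) (split_points a c)"
    moreover obtain y i where "p = (y, i)" by (cases p)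
    ultimately have y: "set y \<subseteq> {1..q}" and i: "i \<le> a" "i \<le> length y" "length y - i \<le> c"
      by (auto simp: del_outputs_def split_points_def)
    show "(\<lambda>(y1, y2). (y1 @ y2, length y1)) ((\<lambda>(y, i). (take i y, drop i y)) p) = p"
      using i \<open>p = (y, i)\<close> by simp
    have "set (take i y) \<subseteq> {1..q}" "set (drop i y) \<subseteq> {1..q}"
      using y set_take_subset[of i y] set_drop_subset[of i y] by auto
    then show "(\<lambda>(y, i). (take i y, drop i y)) p \<in> del_outputs q a \<times> del_outputs q c"
      using i \<open>p = (y, i)\<close> by (simp add: del_outputs_def)
  qed (auto simp: del_outputs_def split_points_def subset_iff)
  also have "\<dots> = (\<Sum>y1\<in>del_outputs q a. \<Sum>y2\<in>del_outputs q c. F y1 y2)"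
    by (rule sum.cartesian_product[symmetric])
  finally show ?thesis .
qed

lemma sum_del_inputs_add:
  "(\<Sum>x\<in>del_inputs q (a + c). G x) = (\<Sum>x1\<in>del_inputs q a. \<Sum>x2\<in>del_inputs q c. G (x1 @ x2))"
proof -
  have "(\<Sum>x\<in>del_inputs q (a + c). G x) = (\<Sum>(x1, x2)\<in>del_inputs q a \<times> del_inputs q c. G (x1 @ x2))"
  proof (rule sum.reindex_bij_witness[where j = "\<lambda>x. (take a x, drop a x)" and i = "\<lambda>(x1, x2). x1 @ x2"])
    fix x assume x: "x \<in> del_inputs q (a + c)"
    have "set (take a x) \<subseteq> {1..q}" "set (drop a x) \<subseteq> {1..q}"
      using x set_take_subset[of a x] set_drop_subset[of a x] by (auto simp: del_inputs_def)
    then show "(take a x, drop a x) \<in> del_inputs q a \<times> del_inputs q c"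
      using x by (simp add: del_inputs_def)
  qed (auto simp: del_inputs_def)
  also have "\<dots> = (\<Sum>x1\<in>del_inputs q a. \<Sum>x2\<in>del_inputs q c. G (x1 @ x2))"
    by (rule sum.cartesian_product[symmetric])
  finally show ?thesis .
qed

lemma sum_nested_swap:
  "(\<Sum>a\<in>A. \<Sum>b\<in>B. \<Sum>y\<in>Y. \<Sum>i\<in>I y. f a b y i) = (\<Sum>y\<in>Y. \<Sum>i\<in>I y. \<Sum>a\<in>A. \<Sum>b\<in>B. f a b y i)"
proof -
  have "(\<Sum>a\<in>A. \<Sum>b\<in>B. \<Sum>y\<in>Y. \<Sum>i\<in>I y. f a b y i) = (\<Sum>a\<in>A. \<Sum>y\<in>Y. \<Sum>i\<in>I y. \<Sum>b\<in>B. f a b y i)"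
    by (intro sum.cong refl) (simp add: sum.swap[of _ B] sum.swap[of _ B Y])
  also have "\<dots> = (\<Sum>y\<in>Y. \<Sum>i\<in>I y. \<Sum>a\<in>A. \<Sum>b\<in>B. f a b y i)"
    by (simp add: sum.swap[of _ A] sum.swap[of _ A Y])
  finally show ?thesis .
qed

lemma sum_mult_log_mult:
  fixes p s :: "'a \<Rightarrow> real" and r t :: "'b \<Rightarrow> real"
  assumes s: "\<And>a. a \<in> A \<Longrightarrow> p a \<noteq> 0 \<Longrightarrow> s a > 0" and t: "\<And>b. b \<in> B \<Longrightarrow> r b \<noteq> 0 \<Longrightarrow> t b > 0"
  shows "(\<Sum>a\<in>A. \<Sum>b\<in>B. p a * r b * log \<beta> (s a * t b)) =
    (\<Sum>a\<in>A. p a * log \<beta> (s a)) * sum r B + sum p A * (\<Sum>b\<in>B. r b * log \<beta> (t b))"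
proof -
  have "p a * r b * log \<beta> (s a * t b) = p a * log \<beta> (s a) * r b + p a * (r b * log \<beta> (t b))"
    if "a \<in> A" "b \<in> B" for a b
    using s[OF that(1)] t[OF that(2)] by (cases "p a = 0 \<or> r b = 0") (auto simp: log_mult algebra_simps)
  then have "(\<Sum>a\<in>A. \<Sum>b\<in>B. p a * r b * log \<beta> (s a * t b)) =
      (\<Sum>a\<in>A. \<Sum>b\<in>B. p a * log \<beta> (s a) * r b) + (\<Sum>a\<in>A. \<Sum>b\<in>B. p a * (r b * log \<beta> (t b)))"
    by (simp add: sum.distrib cong: sum.cong)
  then show ?thesis by (simp add: sum_product)
qed


definition concat_dist ::
  "nat \<Rightarrow> nat \<Rightarrow> nat \<Rightarrow> (nat list \<Rightarrow> real) \<Rightarrow> (nat list \<Rightarrow> real) \<Rightarrow> nat list \<Rightarrow> real" where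
  "concat_dist q a c P1 P2 x = (if x \<in> del_inputs q (a + c) then P1 (take a x) * P2 (drop a x) else 0)"

lemma concat_dist_append:
  "x1 \<in> del_inputs q a \<Longrightarrow> x2 \<in> del_inputs q c \<Longrightarrow> concat_dist q a c P1 P2 (x1 @ x2) = P1 x1 * P2 x2"
  unfolding concat_dist_def by (auto simp: del_inputs_def)

lemma concat_dist_in_input_dists:
  assumes P1: "P1 \<in> del_input_dists q a" and P2: "P2 \<in> del_input_dists q c"
  shows "concat_dist q a c P1 P2 \<in> del_input_dists q (a + c)"
proof -
  have "(\<Sum>x\<in>del_inputs q (a + c). concat_dist q a c P1 P2 x) =
      (\<Sum>x1\<in>del_inputs q a. \<Sum>x2\<in>del_inputs q c. P1 x1 * P2 x2)"
    unfolding sum_del_inputs_add by (intro sum.cong refl) (simp add: concat_dist_append)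
  also have "\<dots> = 1" by (simp add: sum_product[symmetric] sum_input_dist[OF P1] sum_input_dist[OF P2])
  finally show ?thesis
    using input_dist_nonneg[OF P1] input_dist_nonneg[OF P2]
    by (auto simp: del_input_dists_def concat_dist_def)
qed

lemma del_output_prob_concat_dist:
  "del_output_prob q (a + c) d (concat_dist q a c P1 P2) y =
    (\<Sum>i\<in>split_points a c y. del_output_prob q a d P1 (take i y) * del_output_prob q c d P2 (drop i y))"
proof -
  let ?W = "del_trans d"
  have "del_output_prob q (a + c) d (concat_dist q a c P1 P2) y =
      (\<Sum>x1\<in>del_inputs q a. \<Sum>x2\<in>del_inputs q c. P1 x1 * P2 x2 * ?W (x1 @ x2) y)"
    unfolding del_output_prob_def sum_del_inputs_add by (intro sum.cong refl) (simp add: concat_dist_append)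
  also have "\<dots> = (\<Sum>x1\<in>del_inputs q a. \<Sum>x2\<in>del_inputs q c. \<Sum>i\<in>split_points a c y.
      (P1 x1 * ?W x1 (take i y)) * (P2 x2 * ?W x2 (drop i y)))"
    by (intro sum.cong refl) (simp add: del_trans_append_split_points sum_distrib_left mult_ac)
  also have "\<dots> = (\<Sum>x1\<in>del_inputs q a. \<Sum>i\<in>split_points a c y. \<Sum>x2\<in>del_inputs q c.
      (P1 x1 * ?W x1 (take i y)) * (P2 x2 * ?W x2 (drop i y)))"
    by (intro sum.cong refl) (rule sum.swap)
  also have "\<dots> = (\<Sum>i\<in>split_points a c y. \<Sum>x1\<in>del_inputs q a. \<Sum>x2\<in>del_inputs q c.
      (P1 x1 * ?W x1 (take i y)) * (P2 x2 * ?W x2 (drop i y)))"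
    by (rule sum.swap)
  also have "\<dots> = (\<Sum>i\<in>split_points a c y. del_output_prob q a d P1 (take i y) * del_output_prob q c d P2 (drop i y))"
    by (simp add: del_output_prob_def sum_product)
  finally show ?thesis .
qed

lemma del_trans_div_output_prob_pos:
  assumes "P \<in> del_input_dists q N" "0 \<le> d" "d \<le> 1" "x \<in> del_inputs q N" "P x * del_trans d x y \<noteq> 0"
  shows "del_trans d x y / del_output_prob q N d P y > 0"
proof -
  have PW_pos: "P x * del_trans d x y > 0"
    using assms input_dist_nonneg del_trans_nonneg by (metis less_eq_real_def mult_nonneg_nonneg)
  then have "del_trans d x y > 0"
    using input_dist_nonneg[OF assms(1), of x] by (auto simp: zero_less_mult_iff)
  then show ?thesis using del_output_prob_pos[OF assms(1-4) PW_pos] by simp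
qed

lemma sum_split_joint_log_ratio_eq:
  assumes P1: "P1 \<in> del_input_dists q a" and P2: "P2 \<in> del_input_dists q c" and d: "0 \<le> d" "d \<le> 1"
  shows "(\<Sum>x1\<in>del_inputs q a. \<Sum>x2\<in>del_inputs q c. \<Sum>y\<in>del_outputs q (a + c). \<Sum>i\<in>split_points a c y.
      P1 x1 * P2 x2 * del_trans d x1 (take i y) * del_trans d x2 (drop i y) *
      log b (del_trans d x1 (take i y) / del_output_prob q a d P1 (take i y) *
             (del_trans d x2 (drop i y) / del_output_prob q c d P2 (drop i y))))
    = del_mutual_info b q a d P1 + del_mutual_info b q c d P2"
proof -
  let ?W = "del_trans d" and ?Q1 = "del_output_prob q a d P1" and ?Q2 = "del_output_prob q c d P2"
  let ?A = "del_inputs q a \<times> del_outputs q a" and ?B = "del_inputs q c \<times> del_outputs q c"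
  define p where "p = (\<lambda>(x1, y1). P1 x1 * ?W x1 y1)"
  define s where "s = (\<lambda>(x1, y1). ?W x1 y1 / ?Q1 y1)"
  define r where "r = (\<lambda>(x2, y2). P2 x2 * ?W x2 y2)"
  define t where "t = (\<lambda>(x2, y2). ?W x2 y2 / ?Q2 y2)"
  define F where "F x1 x2 y1 y2 = p (x1, y1) * r (x2, y2) * log b (s (x1, y1) * t (x2, y2))" for x1 x2 y1 y2
  have "(\<Sum>x1\<in>del_inputs q a. \<Sum>x2\<in>del_inputs q c. \<Sum>y\<in>del_outputs q (a + c). \<Sum>i\<in>split_points a c y.
      P1 x1 * P2 x2 * ?W x1 (take i y) * ?W x2 (drop i y) *
      log b (?W x1 (take i y) / ?Q1 (take i y) * (?W x2 (drop i y) / ?Q2 (drop i y))))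
    = (\<Sum>x1\<in>del_inputs q a. \<Sum>x2\<in>del_inputs q c. \<Sum>y\<in>del_outputs q (a + c). \<Sum>i\<in>split_points a c y.
      F x1 x2 (take i y) (drop i y))"
    by (simp add: F_def p_def r_def s_def t_def mult_ac)
  also have "\<dots> = (\<Sum>x1\<in>del_inputs q a. \<Sum>x2\<in>del_inputs q c. \<Sum>y1\<in>del_outputs q a. \<Sum>y2\<in>del_outputs q c.
      F x1 x2 y1 y2)"
    by (simp only: sum_del_outputs_split_points)
  also have "\<dots> = (\<Sum>x1\<in>del_inputs q a. \<Sum>y1\<in>del_outputs q a. \<Sum>x2\<in>del_inputs q c. \<Sum>y2\<in>del_outputs q c.
      F x1 x2 y1 y2)"
    by (rule sum.cong[OF refl], rule sum.swap)
  also have "\<dots> = (\<Sum>u\<in>?A. \<Sum>v\<in>?B. p u * r v * log b (s u * t v))"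
    by (simp only: sum.cartesian_product' F_def)
  also have "\<dots> = (\<Sum>u\<in>?A. p u * log b (s u)) * sum r ?B + sum p ?A * (\<Sum>v\<in>?B. r v * log b (t v))"
    by (rule sum_mult_log_mult)
      (auto simp: p_def s_def r_def t_def intro: del_trans_div_output_prob_pos[OF P1 d]
        del_trans_div_output_prob_pos[OF P2 d])
  also have "\<dots> = del_mutual_info b q a d P1 + del_mutual_info b q c d P2"
    using sum_joint_del_trans[OF P1, of d] sum_joint_del_trans[OF P2, of d]
    by (simp add: del_mutual_info_eq sum.cartesian_product p_def s_def r_def t_def case_prod_beta)
  finally show ?thesis .
qed


text \<open>The split point of the output carries at most \<open>log (a + 1)\<close> bits of extra information.\<close>

lemma sum_split_output_log_ratio_le:
  assumes P1: "P1 \<in> del_input_dists q a" and P2: "P2 \<in> del_input_dists q c"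
    and d: "0 \<le> d" "d \<le> 1" and b: "b > 1"
  shows "(\<Sum>y\<in>del_outputs q (a + c). \<Sum>i\<in>split_points a c y.
      del_output_prob q a d P1 (take i y) * del_output_prob q c d P2 (drop i y) *
      log b (del_output_prob q (a + c) d (concat_dist q a c P1 P2) y /
             (del_output_prob q a d P1 (take i y) * del_output_prob q c d P2 (drop i y))))
    \<le> log b (a + 1)"
proof -
  let ?Q = "del_output_prob q (a + c) d (concat_dist q a c P1 P2)"
  let ?R = "\<lambda>y i. del_output_prob q a d P1 (take i y) * del_output_prob q c d P2 (drop i y)"
  have Q_dist: "concat_dist q a c P1 P2 \<in> del_input_dists q (a + c)"
    by (rule concat_dist_in_input_dists[OF P1 P2])
  have "(\<Sum>i\<in>split_points a c y. ?R y i * log b (?Q y / ?R y i)) \<le> ?Q y * log b (a + 1)" for y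
  proof -
    have "(\<Sum>i\<in>split_points a c y. ?R y i * log b (?Q y / ?R y i)) \<le>
        ?Q y * log b (card (split_points a c y))"
      using sum_log_ratio_le_log_card[of "split_points a c y" "?R y" b, OF finite_split_points] b
        del_output_prob_nonneg[OF P1 d] del_output_prob_nonneg[OF P2 d]
      by (simp add: del_output_prob_concat_dist)
    also have "\<dots> \<le> ?Q y * log b (a + 1)"
      using b card_split_points_le[of a c y]
      by (intro mult_left_mono log_le_log_of_le del_output_prob_nonneg[OF Q_dist d]) auto
    finally show ?thesis .
  qed
  then have "(\<Sum>y\<in>del_outputs q (a + c). \<Sum>i\<in>split_points a c y. ?R y i * log b (?Q y / ?R y i))
      \<le> (\<Sum>y\<in>del_outputs q (a + c). ?Q y) * log b (a + 1)"
    unfolding sum_distrib_right by (rule sum_mono)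
  then show ?thesis by (simp add: sum_del_output_prob[OF Q_dist])
qed

lemma del_mutual_info_concat_dist_eq:
  "del_mutual_info b q (a + c) d (concat_dist q a c P1 P2) =
    (\<Sum>x1\<in>del_inputs q a. \<Sum>x2\<in>del_inputs q c. \<Sum>y\<in>del_outputs q (a + c). \<Sum>i\<in>split_points a c y.
      P1 x1 * P2 x2 * del_trans d x1 (take i y) * del_trans d x2 (drop i y) *
      log b (del_trans d (x1 @ x2) y / del_output_prob q (a + c) d (concat_dist q a c P1 P2) y))"
  unfolding del_mutual_info_eq sum_del_inputs_add
  by (intro sum.cong refl)
    (simp add: concat_dist_append del_trans_append_split_points sum_distrib_left sum_distrib_right mult_ac)

lemma log_split_ratio_le_log_ratio_concat:
  assumes P1: "P1 \<in> del_input_dists q a" and P2: "P2 \<in> del_input_dists q c"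
    and d: "0 \<le> d" "d \<le> 1" and b: "b > 1"
    and x1: "x1 \<in> del_inputs q a" and x2: "x2 \<in> del_inputs q c" and i: "i \<in> split_points a c y"
    and nonzero: "P1 x1 * P2 x2 * del_trans d x1 (take i y) * del_trans d x2 (drop i y) \<noteq> 0"
  shows "log b (del_trans d x1 (take i y) / del_output_prob q a d P1 (take i y) *
            (del_trans d x2 (drop i y) / del_output_prob q c d P2 (drop i y)))
       - log b (del_output_prob q (a + c) d (concat_dist q a c P1 P2) y /
            (del_output_prob q a d P1 (take i y) * del_output_prob q c d P2 (drop i y)))
     \<le> log b (del_trans d (x1 @ x2) y / del_output_prob q (a + c) d (concat_dist q a c P1 P2) y)"
proof -
  let ?Q = "del_output_prob q (a + c) d (concat_dist q a c P1 P2)"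
  define W1 W2 Q1 Q2 where "W1 = del_trans d x1 (take i y)" and "W2 = del_trans d x2 (drop i y)"
    and "Q1 = del_output_prob q a d P1 (take i y)" and "Q2 = del_output_prob q c d P2 (drop i y)"
  have "P1 x1 * W1 \<noteq> 0" "P2 x2 * W2 \<noteq> 0" using nonzero by (auto simp: W1_def W2_def)
  then have "W1 / Q1 > 0" "W2 / Q2 > 0"
    unfolding W1_def W2_def Q1_def Q2_def
    by (auto intro: del_trans_div_output_prob_pos[OF P1 d x1] del_trans_div_output_prob_pos[OF P2 d x2])
  moreover have "Q1 \<ge> 0" "Q2 \<ge> 0" "W1 \<ge> 0" "W2 \<ge> 0"
    unfolding Q1_def Q2_def W1_def W2_def
    by (auto intro: del_output_prob_nonneg del_trans_nonneg P1 P2 d)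
  ultimately have pos: "W1 > 0" "W2 > 0" "Q1 > 0" "Q2 > 0" by (auto simp: zero_less_divide_iff)
  have W_ge: "W1 * W2 \<le> del_trans d (x1 @ x2) y"
    unfolding del_trans_append_split_points[OF x1 x2] W1_def W2_def
    by (rule member_le_sum[OF i]) (auto intro: mult_nonneg_nonneg del_trans_nonneg d finite_split_points)
  have Q_ge: "Q1 * Q2 \<le> ?Q y"
    unfolding del_output_prob_concat_dist Q1_def Q2_def
    by (rule member_le_sum[OF i])
      (auto intro: mult_nonneg_nonneg del_output_prob_nonneg P1 P2 d finite_split_points)
  have W12_pos: "W1 * W2 > 0" using pos by simp
  then have W_pos: "del_trans d (x1 @ x2) y > 0" using W_ge by linarith
  have "Q1 * Q2 > 0" using pos by simp
  then have Q_pos: "?Q y > 0" using Q_ge by linarith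
  have "log b (W1 * W2) \<le> log b (del_trans d (x1 @ x2) y)"
    using W12_pos W_ge b by (subst log_le_cancel_iff) auto
  then show ?thesis
    using pos W_pos Q_pos b unfolding W1_def[symmetric] W2_def[symmetric] Q1_def[symmetric] Q2_def[symmetric]
    by (simp add: log_divide log_mult)
qed

lemma sum_concat_joint_split_log_ratio_le:
  assumes P1: "P1 \<in> del_input_dists q a" and P2: "P2 \<in> del_input_dists q c"
    and d: "0 \<le> d" "d \<le> 1" and b: "b > 1"
  shows "(\<Sum>x1\<in>del_inputs q a. \<Sum>x2\<in>del_inputs q c. \<Sum>y\<in>del_outputs q (a + c). \<Sum>i\<in>split_points a c y.
      P1 x1 * P2 x2 * del_trans d x1 (take i y) * del_trans d x2 (drop i y) *
      log b (del_output_prob q (a + c) d (concat_dist q a c P1 P2) y /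
             (del_output_prob q a d P1 (take i y) * del_output_prob q c d P2 (drop i y))))
    \<le> log b (a + 1)"
proof -
  let ?Q1 = "del_output_prob q a d P1" and ?Q2 = "del_output_prob q c d P2"
  define L where "L y i = log b (del_output_prob q (a + c) d (concat_dist q a c P1 P2) y /
    (?Q1 (take i y) * ?Q2 (drop i y)))" for y i
  have "(\<Sum>x1\<in>del_inputs q a. \<Sum>x2\<in>del_inputs q c. \<Sum>y\<in>del_outputs q (a + c). \<Sum>i\<in>split_points a c y.
      P1 x1 * P2 x2 * del_trans d x1 (take i y) * del_trans d x2 (drop i y) * L y i)
    = (\<Sum>y\<in>del_outputs q (a + c). \<Sum>i\<in>split_points a c y.
      (\<Sum>x1\<in>del_inputs q a. \<Sum>x2\<in>del_inputs q c.
        P1 x1 * P2 x2 * del_trans d x1 (take i y) * del_trans d x2 (drop i y)) * L y i)"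
    by (simp only: sum_nested_swap sum_distrib_right)
  also have "\<dots> = (\<Sum>y\<in>del_outputs q (a + c). \<Sum>i\<in>split_points a c y.
      ?Q1 (take i y) * ?Q2 (drop i y) * L y i)"
    by (simp add: del_output_prob_def sum_product mult_ac)
  also have "\<dots> \<le> log b (a + 1)"
    unfolding L_def by (rule sum_split_output_log_ratio_le[OF P1 P2 d b])
  finally show ?thesis unfolding L_def .
qed

lemma del_mutual_info_concat_dist_ge:
  assumes P1: "P1 \<in> del_input_dists q a" and P2: "P2 \<in> del_input_dists q c"
    and d: "0 \<le> d" "d \<le> 1" and b: "b > 1"
  shows "del_mutual_info b q a d P1 + del_mutual_info b q c d P2 - log b (a + 1)
      \<le> del_mutual_info b q (a + c) d (concat_dist q a c P1 P2)"
proof -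
  let ?W = "del_trans d" and ?Q1 = "del_output_prob q a d P1" and ?Q2 = "del_output_prob q c d P2"
  let ?Q = "del_output_prob q (a + c) d (concat_dist q a c P1 P2)"
  define V where "V x1 x2 y i = P1 x1 * P2 x2 * ?W x1 (take i y) * ?W x2 (drop i y)" for x1 x2 y i
  define A where "A x1 x2 y i =
    log b (?W x1 (take i y) / ?Q1 (take i y) * (?W x2 (drop i y) / ?Q2 (drop i y)))" for x1 x2 y i
  define B where "B y i = log b (?Q y / (?Q1 (take i y) * ?Q2 (drop i y)))" for y i
  have pointwise: "V x1 x2 y i * A x1 x2 y i - V x1 x2 y i * B y i \<le> V x1 x2 y i * log b (?W (x1 @ x2) y / ?Q y)"
    if "x1 \<in> del_inputs q a" "x2 \<in> del_inputs q c" "i \<in> split_points a c y" for x1 x2 y i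
  proof (cases "V x1 x2 y i = 0")
    case False
    then have "V x1 x2 y i > 0"
      using input_dist_nonneg[OF P1] input_dist_nonneg[OF P2] del_trans_nonneg[OF d]
      by (simp add: V_def less_le)
    then show ?thesis
      unfolding right_diff_distrib[symmetric] A_def B_def
      using log_split_ratio_le_log_ratio_concat[OF P1 P2 d b that] False
      by (intro mult_left_mono) (auto simp: V_def)
  qed simp
  have "del_mutual_info b q a d P1 + del_mutual_info b q c d P2 - log b (a + 1)
      \<le> (\<Sum>x1\<in>del_inputs q a. \<Sum>x2\<in>del_inputs q c. \<Sum>y\<in>del_outputs q (a + c). \<Sum>i\<in>split_points a c y.
           V x1 x2 y i * A x1 x2 y i)
       - (\<Sum>x1\<in>del_inputs q a. \<Sum>x2\<in>del_inputs q c. \<Sum>y\<in>del_outputs q (a + c). \<Sum>i\<in>split_points a c y.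
           V x1 x2 y i * B y i)"
    using sum_split_joint_log_ratio_eq[OF P1 P2 d, of b] sum_concat_joint_split_log_ratio_le[OF P1 P2 d b]
    unfolding V_def A_def B_def by simp
  also have "\<dots> \<le> del_mutual_info b q (a + c) d (concat_dist q a c P1 P2)"
    unfolding del_mutual_info_concat_dist_eq V_def[symmetric] sum_subtractf[symmetric]
    by (intro sum_mono pointwise)
  finally show ?thesis .
qed

lemma del_max_info_superadd:
  assumes d: "0 \<le> d" "d \<le> 1" and b: "b > 1" and q: "q \<ge> 1"
  shows "del_max_info b q a d + del_max_info b q c d - log b (a + 1) \<le> del_max_info b q (a + c) d"
proof -
  let ?M = "\<lambda>n. del_max_info b q n d"
  have "?M c \<le> ?M (a + c) + log b (a + 1) - ?M a"
  proof (rule del_max_info_le[OF q])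
    fix P2 assume P2: "P2 \<in> del_input_dists q c"
    have "?M a \<le> ?M (a + c) + log b (a + 1) - del_mutual_info b q c d P2"
    proof (rule del_max_info_le[OF q])
      fix P1 assume P1: "P1 \<in> del_input_dists q a"
      have "del_mutual_info b q a d P1 + del_mutual_info b q c d P2 - log b (a + 1)
          \<le> del_mutual_info b q (a + c) d (concat_dist q a c P1 P2)"
        by (rule del_mutual_info_concat_dist_ge[OF P1 P2 d b])
      also have "\<dots> \<le> ?M (a + c)"
        by (rule del_mutual_info_le_max_info[OF d b q concat_dist_in_input_dists[OF P1 P2]])
      finally show "del_mutual_info b q a d P1 \<le> ?M (a + c) + log b (a + 1) - del_mutual_info b q c d P2"
        by simp
    qed
    then show "del_mutual_info b q c d P2 \<le> ?M (a + c) + log b (a + 1) - ?M a" by simp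
  qed
  then show ?thesis by simp
qed


section \<open>Existence of the capacity\<close>

lemma approx_superadditive_mult:
  fixes f g :: "nat \<Rightarrow> real"
  assumes "0 \<le> f 0" and "\<And>m n. f m + f n - g m \<le> f (m + n)"
  shows "k * (f N - g N) \<le> f (k * N)"
proof (induction k)
  case 0 then show ?case using assms(1) by simp
next
  case (Suc k)
  have "f N + f (k * N) - g N \<le> f (N + k * N)" by (rule assms(2))
  then show ?case using Suc.IH by (simp add: algebra_simps)
qed

lemma approx_superadditive_lower_bound:
  fixes f g :: "nat \<Rightarrow> real"
  assumes f_nonneg: "\<And>n. 0 \<le> f n" and superadd: "\<And>m n. f m + f n - g m \<le> f (m + n)"
    and g_mono: "\<And>m n. m \<le> n \<Longrightarrow> g m \<le> g n" and N: "N \<ge> 1" and n: "n \<ge> 1"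
  shows "(f N - g N) / N - (N * \<bar>(f N - g N) / N\<bar> + g N) / n \<le> f n / n"
proof -
  define h where "h = (f N - g N) / N"
  define k r where "k = n div N" and "r = n mod N"
  have n_eq: "n = r + k * N" by (simp add: k_def r_def)
  have r_le: "r \<le> N" using N by (simp add: r_def less_imp_le)
  have "f r + f (k * N) - g r \<le> f n" unfolding n_eq by (rule superadd)
  then have "f (k * N) - g N \<le> f n" using f_nonneg[of r] g_mono[OF r_le] by simp
  moreover have "real (k * N) * h \<le> f (k * N)"
    using approx_superadditive_mult[of f g k N] f_nonneg superadd N by (simp add: h_def)
  moreover have "real n * h - N * \<bar>h\<bar> \<le> real (k * N) * h"
  proof (cases "h \<ge> 0")
    case True
    have "(real n - N) * h \<le> real (k * N) * h"
      by (rule mult_right_mono) (use n_eq r_le True in simp_all)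
    then show ?thesis using True by (simp add: algebra_simps)
  next
    case False
    have "real n * h \<le> real (k * N) * h"
      by (rule mult_right_mono_neg) (use n_eq False in simp_all)
    moreover have "0 \<le> real N * \<bar>h\<bar>" by simp
    ultimately show ?thesis by linarith
  qed
  ultimately have "real n * h - (N * \<bar>h\<bar> + g N) \<le> f n" by simp
  then have "(real n * h - (N * \<bar>h\<bar> + g N)) / n \<le> f n / n"
    using n by (intro divide_right_mono) auto
  then show ?thesis using n by (simp add: h_def field_simps)
qed

text \<open>Fekete's lemma for sequences that are superadditive up to a sublinear error \<open>g\<close>.\<close>

lemma approx_superadditive_convergent:
  fixes f g :: "nat \<Rightarrow> real" and C :: real
  assumes f_nonneg: "\<And>n. 0 \<le> f n" and f_le: "\<And>n. f n \<le> n * C"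
    and superadd: "\<And>m n. f m + f n - g m \<le> f (m + n)"
    and g_nonneg: "\<And>n. 0 \<le> g n" and g_mono: "\<And>m n. m \<le> n \<Longrightarrow> g m \<le> g n"
    and g_sublinear: "(\<lambda>n. g n / n) \<longlonglongrightarrow> 0"
  shows "convergent (\<lambda>n. f n / n)"
proof -
  define h where "h N = (f N - g N) / N" for N
  define L where "L = (SUP N\<in>{1..}. h N)"
  have "h N \<le> C" if "N \<ge> 1" for N
  proof -
    have "h N \<le> f N / N" unfolding h_def using that g_nonneg[of N] by (intro divide_right_mono) auto
    also have "\<dots> \<le> C" using f_le[of N] that by (simp add: divide_le_eq mult.commute)
    finally show ?thesis .
  qed
  then have bdd: "bdd_above (h ` {1..})" by (intro bdd_aboveI2) auto
  have "(\<lambda>n. f n / n) \<longlonglongrightarrow> L"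
  proof (rule LIMSEQ_I)
    fix e :: real assume e: "e > 0"
    have "L - e / 2 < L" using e by simp
    then obtain N where N: "N \<ge> 1" and hN: "L - e / 2 < h N"
      unfolding L_def by (subst (asm) less_cSUP_iff[OF _ bdd]) auto
    define M where "M = N * \<bar>h N\<bar> + g N"
    obtain n1 where n1: "\<And>n. n \<ge> n1 \<Longrightarrow> norm (g n / n - 0) < e"
      using LIMSEQ_D[OF g_sublinear e] by blast
    show "\<exists>n0. \<forall>n\<ge>n0. norm (f n / real n - L) < e"
    proof (intro exI allI impI)
      fix n assume n: "n \<ge> max (max n1 1) (nat \<lceil>2 * M / e\<rceil>)"
      then have "n \<ge> n1" "n \<ge> 1" by auto
      have "real n \<ge> 2 * M / e" using n by linarith
      then have "2 * M \<le> real n * e" using e by (simp add: divide_le_eq)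
      then have "M / n \<le> e / 2" using \<open>n \<ge> 1\<close> by (simp add: divide_le_eq mult.commute)
      moreover have "h N - M / n \<le> f n / n"
        using approx_superadditive_lower_bound[of f g N n] f_nonneg superadd g_mono N \<open>n \<ge> 1\<close>
        by (simp add: h_def M_def)
      moreover have "f n / n \<le> h n + g n / n" using \<open>n \<ge> 1\<close> by (simp add: h_def diff_divide_distrib)
      moreover have "h n \<le> L" unfolding L_def by (rule cSUP_upper[OF _ bdd]) (use \<open>n \<ge> 1\<close> in auto)
      moreover have "g n / n < e" using n1[OF \<open>n \<ge> n1\<close>] g_nonneg[of n] by simp
      ultimately have "L - e < f n / n" "f n / n < L + e" using hN by linarith+
      then show "norm (f n / real n - L) < e" unfolding real_norm_def abs_less_iff by linarith
    qed
  qed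
  then show ?thesis by (rule convergentI)
qed

lemma deletion_capacity_limit:
  assumes d: "0 \<le> d" "d \<le> 1" and b: "b > 1" and q: "q \<ge> 1"
  shows "(\<lambda>N. del_max_info b q N d / N) \<longlonglongrightarrow> deletion_capacity b q d"
proof -
  have "(\<lambda>n. ln (real n + 1) / real n) \<longlonglongrightarrow> 0" by real_asymp
  then have "(\<lambda>n. ln (real n + 1) / real n / ln b) \<longlonglongrightarrow> 0 / ln b"
    by (rule tendsto_divide) (use b in auto)
  then have log_sublinear: "(\<lambda>n. log b (real (n + 1)) / real n) \<longlonglongrightarrow> 0"
    by (simp add: log_def field_simps)
  have "convergent (\<lambda>N. del_max_info b q N d / N)"
  proof (rule approx_superadditive_convergent[where g = "\<lambda>m. log b (real (m + 1))" and C = "log b q"])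
    show "del_max_info b q m d + del_max_info b q n d - log b (real (m + 1)) \<le> del_max_info b q (m + n) d"
      for m n using del_max_info_superadd[OF d b q] by simp
    show "0 \<le> del_max_info b q n d" for n by (rule del_max_info_nonneg[OF d b q])
    show "del_max_info b q n d \<le> n * log b q" for n by (rule del_max_info_le_log[OF d b q])
    show "0 \<le> log b (real (n + 1))" for n using b by simp
    show "log b (real (m + 1)) \<le> log b (real (n + 1))" if "m \<le> n" for m n using b that by simp
  qed (rule log_sublinear)
  then show ?thesis unfolding deletion_capacity_def by (rule convergent_LIMSEQ_iff[THEN iffD1])
qed

section \<open>Comparison of capacities\<close>

lemma del_max_info_merge_le:
  assumes d: "0 \<le> d" "d \<le> 1" and b: "b > 1" and q: "q \<ge> 1" and q': "q' \<ge> 1" and K: "K \<ge> 1"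
    and maps: "f ` {1..q} \<subseteq> {1..q'}" and fibres: "\<And>c. card {s\<in>{1..q}. f s = c} \<le> K"
  shows "del_max_info b q N d \<le> del_max_info b q' N d + N * (1 - d) * log b K"
proof (rule del_max_info_le[OF q])
  fix P assume P: "P \<in> del_input_dists q N"
  have "del_mutual_info b q N d P \<le> del_mutual_info b q' N d (push_dist f q N P) + N * (1 - d) * log b K"
    by (rule del_mutual_info_le_push_dist[OF maps P d b K fibres])
  also have "del_mutual_info b q' N d (push_dist f q N P) \<le> del_max_info b q' N d"
    by (rule del_mutual_info_le_max_info[OF d b q' push_dist_in_input_dists[OF maps P]])
  finally show "del_mutual_info b q N d P \<le> del_max_info b q' N d + N * (1 - d) * log b K" by simp
qed

lemma deletion_capacity_merge_le:
  assumes d: "0 \<le> d" "d \<le> 1" and b: "b > 1" and q: "q \<ge> 1" and q': "q' \<ge> 1" and "K \<ge> 1"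
    and "f ` {1..q} \<subseteq> {1..q'}" and "\<And>c. card {s\<in>{1..q}. f s = c} \<le> K"
  shows "deletion_capacity b q d \<le> deletion_capacity b q' d + (1 - d) * log b K"
proof (rule LIMSEQ_le)
  show "(\<lambda>N. del_max_info b q N d / N) \<longlonglongrightarrow> deletion_capacity b q d"
    by (rule deletion_capacity_limit[OF d b q])
  show "(\<lambda>N. del_max_info b q' N d / N + (1 - d) * log b K) \<longlonglongrightarrow> deletion_capacity b q' d + (1 - d) * log b K"
    by (intro tendsto_add tendsto_const deletion_capacity_limit[OF d b q'])
  have "del_max_info b q N d / N \<le> del_max_info b q' N d / N + (1 - d) * log b K" if "N \<ge> 1" for N
    using divide_right_mono[OF del_max_info_merge_le[OF assms, of N], of N] that
    by (simp add: add_divide_distrib)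
  then show "\<exists>N0. \<forall>N\<ge>N0. del_max_info b q N d / N \<le> del_max_info b q' N d / N + (1 - d) * log b K"
    by blast
qed

definition sym_class :: "nat \<Rightarrow> nat \<Rightarrow> nat" where
  "sym_class K s = (if s \<le> K then 1 else 2)"

lemma card_sym_class_fibre: "card {s\<in>{1..2 * K}. sym_class K s = c} \<le> K"
proof -
  have "{s\<in>{1..2 * K}. sym_class K s = c} \<subseteq> (if c = 1 then {1..K} else {K + 1..2 * K})"
    by (auto simp: sym_class_def)
  moreover have "card (if c = 1 then {1..K} else {K + 1..2 * K}) = K" by simp
  ultimately show ?thesis using card_mono[of "if c = 1 then {1..K} else {K + 1..2 * K}"] by simp
qed

theorem theorem1:
  fixes K :: nat and d b :: real
  assumes "K \<ge> 1" and "0 \<le> d" and "d \<le> 1" and "b > 1"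
  shows "deletion_capacity b (2 * K) d \<le> deletion_capacity b 2 d + (1 - d) * log b (real K)"
proof -
  have "sym_class K ` {1..2 * K} \<subseteq> {1..2}" by (auto simp: sym_class_def)
  then show ?thesis
    using deletion_capacity_merge_le[OF assms(2-4) _ _ assms(1) _ card_sym_class_fibre] assms(1) by simp
qed

end
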